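(* There exists a symmetric noncommutative polynomial $f\in\mathbb{R}\langle x_1,x_2,x_3\rangle$ such that $f\in\mathbb{R}\langle x_1,x_2\rangle+\mathbb{R}\langle x_2,x_3\rangle$ and $f$ is a sum of hermitian squares in $\mathbb{R}\langle x_1,x_2,x_3\rangle$, but $f\notin\Sigma\langle x_1,x_2\rangle+\Sigma\langle x_2,x_3\rangle$.
   Context: $\mathbb{R}\langle x_1,\dots,x_n\rangle$ is the free real algebra of polynomials in noncommuting letters $x_1,\dots,x_n$, equipped with the involution $\star$ fixing $\mathbb{R}\cup\{x_1,\dots,x_n\}$ pointwise and reversing words; $f$ is symmetric if $f^\star=f$. A sum of hermitian squares (SOHS) is a polynomial of the form $\sum_i h_i^\star h_i$. For a subset of letters, $\mathbb{R}\langle x_i,x_j\rangle$ denotes the subalgebra of polynomials in those letters only, and $\Sigma\langle x_i,x_j\rangle$ the set of sums of hermitian squares $\sum_k h_k^\star h_k$ with all $h_k\in\mathbb{R}\langle x_i,x_j\rangle$. *)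

theory Defs
  imports Complex_Main
begin

text \<open>Noncommutative real polynomials: letters are natural numbers, words are lists of
letters, a polynomial is its coefficient function on words (with finite support).\<close>

type_synonym ncpoly = "nat list \<Rightarrow> real"

definition nc_poly :: "nat set \<Rightarrow> ncpoly \<Rightarrow> bool" where
  "nc_poly X f \<longleftrightarrow> finite {w. f w \<noteq> 0} \<and> (\<forall>w. f w \<noteq> 0 \<longrightarrow> set w \<subseteq> X)"

definition nc_mult :: "ncpoly \<Rightarrow> ncpoly \<Rightarrow> ncpoly" where
  "nc_mult f g = (\<lambda>w. \<Sum>i\<le>length w. f (take i w) * g (drop i w))"

definition nc_star :: "ncpoly \<Rightarrow> ncpoly" where
  "nc_star f = (\<lambda>w. f (rev w))"

definition SOHS :: "nat set \<Rightarrow> ncpoly \<Rightarrow> bool" where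
  "SOHS X f \<longleftrightarrow> (\<exists>(n::nat) (hs :: nat \<Rightarrow> ncpoly). (\<forall>i<n. nc_poly X (hs i)) \<and>
      f = (\<lambda>w. \<Sum>i<n. nc_mult (nc_star (hs i)) (hs i) w))"

end

theory Submission
  imports Defs "HOL-Analysis.Euclidean_Space"
begin

(* The witness is f = h1* h1 + h2* h2 with h1 = x1 + x2 x3 + 1 + x2 - x2^2 and
   h2 = x2 x1 - x3 + 2 - x2 - 2 x2^2; the terms containing both x1 and x3 cancel.
   Suppose f = g + h with g a sum of hermitian squares in x1, x2 and h one in x2, x3.
   Since f has degree 4 and leading terms of hermitian squares cannot cancel, every
   square in g and h has degree at most 2.  Let x1, x2, x3 act on R^3 by the symmetric
   matrices X1 = E13 + E31, X2(c) = E12 + E21 + E23 + E32 + c E33 and X3 = -X1, and let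
   L(w) = <e1, X(w) e1>, computed with c = 1 on words in x1, x2 and with c = 0 on words
   in x2, x3.  Both recipes agree on the words x2^k with k <= 4, so L is a well-defined
   functional on polynomials of degree at most 4.  On the square of a polynomial p of
   degree at most 2 in either pair of letters, L gives the Gram form |p(X) e1|^2 >= 0,
   hence L(g + h) >= 0, whereas L(f) = -2. *)

abbreviation herm_sq :: "ncpoly \<Rightarrow> ncpoly" where
  "herm_sq h \<equiv> nc_mult (nc_star h) h"

lemma herm_sq_apply: "herm_sq h w = (\<Sum>i\<le>length w. h (rev (take i w)) * h (drop i w))"
  by (simp add: nc_mult_def nc_star_def)

lemma herm_sq_rev: "herm_sq h (rev w) = herm_sq h w"
proof -
  have "herm_sq h (rev w)
      = (\<Sum>i\<le>length w. h (drop (length w - i) w) * h (rev (take (length w - i) w)))"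
    by (simp add: herm_sq_apply take_rev drop_rev)
  also have "\<dots> = (\<Sum>i\<le>length w. h (rev (take i w)) * h (drop i w))"
    using sum.atLeastAtMost_rev[of "\<lambda>i. h (rev (take i w)) * h (drop i w)" 0 "length w"]
    by (simp add: atLeast0AtMost mult.commute)
  finally show ?thesis by (simp add: herm_sq_apply)
qed

lemma herm_sq_nonzero:
  assumes "herm_sq h w \<noteq> 0"
  obtains a b where "h a \<noteq> 0" "h b \<noteq> 0" "w = rev a @ b"
proof -
  obtain i where "h (rev (take i w)) * h (drop i w) \<noteq> 0"
    using assms sum.not_neutral_contains_not_neutral unfolding herm_sq_apply by blast
  then show ?thesis by (intro that[of "rev (take i w)" "drop i w"]) auto
qed

lemma herm_sq_degree:
  assumes "\<And>a. h a \<noteq> 0 \<Longrightarrow> length a \<le> d" and "herm_sq h w \<noteq> 0"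
  shows "length w \<le> 2 * d"
  using assms(2) by (elim herm_sq_nonzero) (auto dest!: assms(1))

lemma herm_sq_top:
  assumes "\<And>a. h a \<noteq> 0 \<Longrightarrow> length a \<le> length u"
  shows "herm_sq h (rev u @ u) = h u * h u"
proof -
  let ?w = "rev u @ u"
  have zero: "h (rev (take i ?w)) * h (drop i ?w) = 0" if "i \<in> {..length ?w} - {length u}" for i
  proof (cases "i < length u")
    case True
    then have "length (drop i ?w) > length u" by simp
    then show ?thesis using assms by (metis mult_zero_right not_le)
  next
    case False
    then have "length (rev (take i ?w)) > length u" using that by auto
    then show ?thesis using assms by (metis mult_zero_left not_le)
  qed
  have "herm_sq h ?w = (\<Sum>i\<in>{length u}. h (rev (take i ?w)) * h (drop i ?w))"
    unfolding herm_sq_apply by (intro sum.mono_neutral_right ballI zero) auto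
  then show ?thesis by simp
qed

lemma herm_sq_eq_sum_pairs:
  assumes H: "finite H" and supp: "\<And>a. h a \<noteq> 0 \<Longrightarrow> a \<in> H"
  shows "herm_sq h w = (\<Sum>a\<in>H. \<Sum>b\<in>H. if w = rev a @ b then h a * h b else 0)"
proof -
  have expand: "h x = (\<Sum>a\<in>H. if a = x then h a else 0)" for x
    using H supp by (cases "x \<in> H") auto
  have split_iff: "(a = rev (take i w) \<and> b = drop i w) \<longleftrightarrow> (i = length a \<and> w = rev a @ b)"
    if "i \<le> length w" for a b i
    using that by auto
  have "herm_sq h w = (\<Sum>i\<le>length w. \<Sum>a\<in>H. \<Sum>b\<in>H.
       if a = rev (take i w) \<and> b = drop i w then h a * h b else 0)"
    unfolding herm_sq_apply by (subst (1 2) expand) (auto simp: sum_product intro!: sum.cong)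
  also have "\<dots> = (\<Sum>i\<le>length w. \<Sum>a\<in>H. \<Sum>b\<in>H.
       if i = length a \<and> w = rev a @ b then h a * h b else 0)"
    by (intro sum.cong refl) (simp add: split_iff)
  also have "\<dots> = (\<Sum>a\<in>H. \<Sum>b\<in>H. \<Sum>i\<le>length w.
       if i = length a \<and> w = rev a @ b then h a * h b else 0)"
    by (subst sum.swap, rule sum.cong, rule refl, subst sum.swap, rule refl)
  also have "\<dots> = (\<Sum>a\<in>H. \<Sum>b\<in>H. if w = rev a @ b then h a * h b else 0)"
    by (intro sum.cong refl) (auto simp: if_distrib[symmetric] cong: if_cong)
  finally show ?thesis .
qed

lemma sum_herm_sq_mult:
  assumes W: "finite W" and H: "finite H" and supp: "\<And>a. h a \<noteq> 0 \<Longrightarrow> a \<in> H"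
    and HW: "\<And>a b. a \<in> H \<Longrightarrow> b \<in> H \<Longrightarrow> rev a @ b \<in> W"
  shows "(\<Sum>w\<in>W. herm_sq h w * L w) = (\<Sum>a\<in>H. \<Sum>b\<in>H. h a * h b * L (rev a @ b))"
proof -
  have "(\<Sum>w\<in>W. herm_sq h w * L w)
      = (\<Sum>w\<in>W. \<Sum>a\<in>H. \<Sum>b\<in>H. if w = rev a @ b then h a * h b * L w else 0)"
    by (simp add: herm_sq_eq_sum_pairs[OF H supp] sum_distrib_right
        if_distrib[where f="\<lambda>x. x * _"] cong: if_cong)
  also have "\<dots> = (\<Sum>a\<in>H. \<Sum>b\<in>H. \<Sum>w\<in>W. if w = rev a @ b then h a * h b * L w else 0)"
    by (subst sum.swap, rule sum.cong, rule refl, subst sum.swap, rule refl)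
  also have "\<dots> = (\<Sum>a\<in>H. \<Sum>b\<in>H. h a * h b * L (rev a @ b))"
    using W HW by (intro sum.cong refl) simp
  finally show ?thesis .
qed

lemma nc_poly_add:
  assumes "nc_poly X f" "nc_poly X g"
  shows "nc_poly X (\<lambda>w. f w + g w)"
proof -
  have "{w. f w + g w \<noteq> 0} \<subseteq> {w. f w \<noteq> 0} \<union> {w. g w \<noteq> 0}" by auto
  with assms show ?thesis
    unfolding nc_poly_def by (metis (mono_tags, lifting) finite_Un finite_subset add.right_neutral)
qed

lemma nc_poly_herm_sq:
  assumes "nc_poly X h"
  shows "nc_poly X (herm_sq h)"
proof -
  let ?S = "{w. h w \<noteq> 0}"
  have "{w. herm_sq h w \<noteq> 0} \<subseteq> (\<lambda>(a, b). rev a @ b) ` (?S \<times> ?S)"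
    by (force elim: herm_sq_nonzero)
  moreover have "finite ((\<lambda>(a, b). rev a @ b) ` (?S \<times> ?S))"
    using assms by (simp add: nc_poly_def)
  ultimately have "finite {w. herm_sq h w \<noteq> 0}" by (rule finite_subset)
  moreover have "set w \<subseteq> X" if "herm_sq h w \<noteq> 0" for w
    using that assms by (elim herm_sq_nonzero) (auto simp: nc_poly_def)
  ultimately show ?thesis by (simp add: nc_poly_def)
qed

lemma nc_poly_split:
  assumes "finite {w. f w \<noteq> 0}" and "\<And>w. f w \<noteq> 0 \<Longrightarrow> set w \<subseteq> X \<or> set w \<subseteq> Y"
  shows "\<exists>g h. nc_poly X g \<and> nc_poly Y h \<and> f = (\<lambda>w. g w + h w)"
proof (intro exI conjI)
  let ?g = "\<lambda>w. if set w \<subseteq> X then f w else 0"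
  let ?h = "\<lambda>w. if set w \<subseteq> X then 0 else f w"
  show "nc_poly X ?g" "nc_poly Y ?h"
    using assms by (auto simp: nc_poly_def elim!: rev_finite_subset)
  show "f = (\<lambda>w. ?g w + ?h w)" by auto
qed

lemma SOHS_add_family:
  assumes "SOHS X g" "SOHS Y h"
  obtains I :: "(nat + nat) set" and hs
  where "finite I" "\<And>i. i \<in> I \<Longrightarrow> nc_poly X (hs i) \<or> nc_poly Y (hs i)"
    "(\<lambda>w. g w + h w) = (\<lambda>w. \<Sum>i\<in>I. herm_sq (hs i) w)"
proof -
  obtain n1 :: nat and hs1 :: "nat \<Rightarrow> ncpoly"
    where hs1: "\<forall>i<n1. nc_poly X (hs1 i)" "g = (\<lambda>w. \<Sum>i<n1. herm_sq (hs1 i) w)"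
    using assms(1) unfolding SOHS_def by blast
  obtain n2 :: nat and hs2 :: "nat \<Rightarrow> ncpoly"
    where hs2: "\<forall>i<n2. nc_poly Y (hs2 i)" "h = (\<lambda>w. \<Sum>i<n2. herm_sq (hs2 i) w)"
    using assms(2) unfolding SOHS_def by blast
  show ?thesis
    by (rule that[of "{..<n1} <+> {..<n2}" "case_sum hs1 hs2"]) (auto simp: hs1 hs2 sum.Plus)
qed

lemma SOHS_degree_bound:
  fixes hs :: "'i \<Rightarrow> ncpoly"
  assumes I: "finite I" and fin: "\<And>i. i \<in> I \<Longrightarrow> finite {w. hs i w \<noteq> 0}"
    and vanish: "\<And>w. 2 * d < length w \<Longrightarrow> (\<Sum>i\<in>I. herm_sq (hs i) w) = 0"
    and "i \<in> I" "hs i v \<noteq> 0"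
  shows "length v \<le> d"
proof (rule ccontr)
  define S where "S = (\<Union>i\<in>I. {w. hs i w \<noteq> 0})"
  have "finite S" "v \<in> S" using I fin \<open>i \<in> I\<close> \<open>hs i v \<noteq> 0\<close> by (auto simp: S_def)
  then obtain u where "u \<in> S" and longest: "\<And>w. w \<in> S \<Longrightarrow> length w \<le> length u"
    using Max_in[of "length ` S"] Max_ge[of "length ` S"] by fastforce
  assume "\<not> length v \<le> d"
  then have long: "2 * d < length (rev u @ u)" using longest[OF \<open>v \<in> S\<close>] by simp
  have "herm_sq (hs j) (rev u @ u) = hs j u * hs j u" if "j \<in> I" for j
    using that by (intro herm_sq_top longest) (auto simp: S_def)
  then have "(\<Sum>j\<in>I. hs j u * hs j u) = (\<Sum>j\<in>I. herm_sq (hs j) (rev u @ u))" by simp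
  also have "\<dots> = 0" using long by (rule vanish)
  finally have "\<forall>j\<in>I. hs j u = 0" using I by (simp add: sum_nonneg_eq_0_iff)
  with \<open>u \<in> S\<close> show False by (auto simp: S_def)
qed

lemma gram_form_nonneg:
  fixes v :: "'b \<Rightarrow> 'a::real_inner"
  shows "0 \<le> (\<Sum>a\<in>H. \<Sum>b\<in>H. c a * c b * inner (v a) (v b))"
proof -
  have "(\<Sum>a\<in>H. \<Sum>b\<in>H. c a * c b * inner (v a) (v b))
      = inner (\<Sum>a\<in>H. c a *\<^sub>R v a) (\<Sum>b\<in>H. c b *\<^sub>R v b)"
    by (subst inner_sum_left) (simp add: inner_sum_right ac_simps)
  then show ?thesis by simp
qed

lemma inner_foldr_selfadjoint:
  fixes T :: "'l \<Rightarrow> 'a::real_inner \<Rightarrow> 'a"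
  assumes selfadjoint: "\<And>a x y. inner (T a x) y = inner x (T a y)"
  shows "inner (foldr T u v) (foldr T t v) = inner v (foldr T (rev u @ t) v)"
proof (induction u arbitrary: t)
  case (Cons a u)
  have "inner (foldr T (a # u) v) (foldr T t v) = inner (foldr T u v) (foldr T (a # t) v)"
    by (simp add: selfadjoint)
  also have "\<dots> = inner v (foldr T (rev (a # u) @ t) v)" using Cons.IH[of "a # t"] by simp
  finally show ?case .
qed simp

definition words :: "nat set \<Rightarrow> nat \<Rightarrow> nat list set" where
  "words X n = {w. set w \<subseteq> X \<and> length w \<le> n}"

lemma finite_words: "finite X \<Longrightarrow> finite (words X n)"
  unfolding words_def by (rule finite_lists_length_le)

lemma rev_append_words: "a \<in> words X m \<Longrightarrow> b \<in> words X n \<Longrightarrow> rev a @ b \<in> words X (m + n)"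
  by (auto simp: words_def)

definition rep :: "real \<Rightarrow> nat \<Rightarrow> real \<times> real \<times> real \<Rightarrow> real \<times> real \<times> real" where
  "rep c a = (\<lambda>(x, y, z). if a = 1 then (z, 0, x) else if a = 2 then (y, x + z, y + c * z)
     else if a = 3 then (- z, 0, - x) else 0)"

definition rep_word :: "real \<Rightarrow> nat list \<Rightarrow> real \<times> real \<times> real" where
  "rep_word c w = foldr (rep c) w (1, 0, 0)"

definition lam_word :: "nat list \<Rightarrow> real" where
  "lam_word w = (if set w \<subseteq> {1,2} then inner (rep_word 1 []) (rep_word 1 w)
     else if set w \<subseteq> {2,3} then inner (rep_word 0 []) (rep_word 0 w) else 0)"

definition lam :: "ncpoly \<Rightarrow> real" where
  "lam p = (\<Sum>w\<in>words {1,2,3} 4. p w * lam_word w)"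

lemma rep_selfadjoint: "inner (rep c a x) y = inner x (rep c a y)"
  by (cases x; cases y) (simp add: rep_def algebra_simps)

lemma inner_rep_word:
  "inner (rep_word c u) (rep_word c t) = inner (rep_word c []) (rep_word c (rev u @ t))"
  by (simp add: rep_word_def inner_foldr_selfadjoint[OF rep_selfadjoint])

lemma rep_word_agree:
  assumes "set w \<subseteq> {2}" "length w \<le> 4"
  shows "inner (rep_word 1 []) (rep_word 1 w) = inner (rep_word 0 []) (rep_word 0 w)"
proof -
  have "w = replicate (length w) 2" using assms(1) by (intro replicate_eqI) auto
  moreover have "length w \<in> {0, 1, 2, 3, 4}"
    using assms(2) by (auto simp: le_Suc_eq numeral_eq_Suc)
  ultimately show ?thesis by (auto simp: rep_word_def rep_def numeral_eq_Suc)
qed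

lemma lam_word_gram_12:
  assumes "set a \<subseteq> {1,2}" "set b \<subseteq> {1,2}"
  shows "lam_word (rev a @ b) = inner (rep_word 1 a) (rep_word 1 b)"
  using assms by (simp add: lam_word_def inner_rep_word[of 1 a b])

lemma lam_word_gram_23:
  assumes "a \<in> words {2,3} 2" "b \<in> words {2,3} 2"
  shows "lam_word (rev a @ b) = inner (rep_word 0 a) (rep_word 0 b)"
proof (cases "set (rev a @ b) \<subseteq> {1,2}")
  case True
  with assms have "set (rev a @ b) \<subseteq> {2}" "length (rev a @ b) \<le> 4" by (auto simp: words_def)
  with True show ?thesis by (simp add: lam_word_def inner_rep_word[of 0 a b] rep_word_agree)
next
  case False
  with assms show ?thesis by (auto simp: lam_word_def inner_rep_word[of 0 a b] words_def)
qed

lemma lam_add: "lam (\<lambda>w. p w + q w) = lam p + lam q"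
  unfolding lam_def by (simp add: distrib_right sum.distrib)

lemma lam_sum: "lam (\<lambda>w. \<Sum>i\<in>I. p i w) = (\<Sum>i\<in>I. lam (p i))"
  unfolding lam_def by (simp add: sum_distrib_right sum.swap[of _ I])

lemma lam_herm_sq:
  assumes "finite H" "\<And>w. h w \<noteq> 0 \<Longrightarrow> w \<in> H" "H \<subseteq> words {1,2,3} 2"
  shows "lam (herm_sq h) = (\<Sum>a\<in>H. \<Sum>b\<in>H. h a * h b * lam_word (rev a @ b))"
  unfolding lam_def using assms rev_append_words[of _ "{1,2,3}" 2 _ 2]
  by (intro sum_herm_sq_mult finite_words) (simp | blast)+

lemma lam_herm_sq_nonneg:
  assumes "nc_poly {1,2} h \<or> nc_poly {2,3} h" and deg: "\<And>w. h w \<noteq> 0 \<Longrightarrow> length w \<le> 2"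
  shows "0 \<le> lam (herm_sq h)"
proof -
  obtain X c where h: "nc_poly X h" and X: "X \<subseteq> {1,2,3}"
    and gram: "\<And>a b. a \<in> words X 2 \<Longrightarrow> b \<in> words X 2 \<Longrightarrow>
      lam_word (rev a @ b) = inner (rep_word c a) (rep_word c b)"
    using assms(1) lam_word_gram_12 lam_word_gram_23 by (auto simp: words_def)
  have "lam (herm_sq h) = (\<Sum>a\<in>words X 2. \<Sum>b\<in>words X 2. h a * h b * lam_word (rev a @ b))"
    using X h deg by (intro lam_herm_sq finite_words) (auto simp: words_def nc_poly_def finite_subset)
  also have "\<dots> = (\<Sum>a\<in>words X 2. \<Sum>b\<in>words X 2. h a * h b * inner (rep_word c a) (rep_word c b))"
    by (simp add: gram)
  finally show ?thesis by (simp add: gram_form_nonneg)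
qed

definition h1 :: ncpoly where
  "h1 w = (if w \<in> {[1], [2,3], [], [2]} then 1 else if w = [2,2] then -1 else 0)"

definition h2 :: ncpoly where
  "h2 w = (if w = [2,1] then 1 else if w \<in> {[3], [2]} then -1 else if w = [] then 2
     else if w = [2,2] then -2 else 0)"

definition H1 :: "nat list set" where "H1 = {[1], [2,3], [], [2], [2,2]}"
definition H2 :: "nat list set" where "H2 = {[2,1], [3], [], [2], [2,2]}"

lemma finite_H1: "finite H1" and finite_H2: "finite H2"
  by (simp_all add: H1_def H2_def)

lemma h1_support: "h1 w \<noteq> 0 \<Longrightarrow> w \<in> H1"
  by (auto simp: h1_def H1_def split: if_splits)

lemma h2_support: "h2 w \<noteq> 0 \<Longrightarrow> w \<in> H2"
  by (auto simp: h2_def H2_def split: if_splits)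

lemma nc_poly_h1: "nc_poly {1,2,3} h1"
proof -
  have "{w. h1 w \<noteq> 0} \<subseteq> H1" using h1_support by blast
  then show ?thesis
    using finite_H1 h1_support by (auto simp: nc_poly_def H1_def intro: finite_subset)
qed

lemma nc_poly_h2: "nc_poly {1,2,3} h2"
proof -
  have "{w. h2 w \<noteq> 0} \<subseteq> H2" using h2_support by blast
  then show ?thesis
    using finite_H2 h2_support by (auto simp: nc_poly_def H2_def intro: finite_subset)
qed

definition f_ex :: ncpoly where
  "f_ex = (\<lambda>w. herm_sq h1 w + herm_sq h2 w)"

lemma nc_poly_f_ex: "nc_poly {1,2,3} f_ex"
  unfolding f_ex_def by (intro nc_poly_add nc_poly_herm_sq nc_poly_h1 nc_poly_h2)

lemma nc_star_f_ex: "nc_star f_ex = f_ex"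
proof
  fix w
  show "nc_star f_ex w = f_ex w"
    by (simp only: nc_star_def[of f_ex]) (simp only: f_ex_def herm_sq_rev)
qed

lemma SOHS_f_ex: "SOHS {1,2,3} f_ex"
  unfolding SOHS_def
proof (intro exI conjI)
  let ?hs = "\<lambda>i::nat. if i = 0 then h1 else h2"
  show "\<forall>i<2. nc_poly {1,2,3} (?hs i)" using nc_poly_h1 nc_poly_h2 by simp
  show "f_ex = (\<lambda>w. \<Sum>i<2. herm_sq (?hs i) w)" by (simp add: f_ex_def numeral_2_eq_2)
qed

lemma f_ex_degree:
  assumes "f_ex w \<noteq> 0"
  shows "length w \<le> 4"
proof -
  have "length a \<le> 2" if "h1 a \<noteq> 0 \<or> h2 a \<noteq> 0" for a
    using that by (auto dest!: h1_support h2_support simp: H1_def H2_def)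
  moreover have "herm_sq h1 w \<noteq> 0 \<or> herm_sq h2 w \<noteq> 0" using assms by (auto simp: f_ex_def)
  ultimately show ?thesis using herm_sq_degree[of h1 2 w] herm_sq_degree[of h2 2 w] by auto
qed

lemma f_ex_mixed:
  assumes "1 \<in> set w" "3 \<in> set w"
  shows "f_ex w = 0"
proof -
  (* putting the mixedness test into each summand lets simp discard almost all of them *)
  have restrict: "(\<Sum>a\<in>H. \<Sum>b\<in>H. if w = rev a @ b then c a b else 0)
      = (\<Sum>a\<in>H. \<Sum>b\<in>H. if w = rev a @ b \<and> 1 \<in> set (rev a @ b) \<and> 3 \<in> set (rev a @ b)
           then c a b else 0)" for H and c :: "nat list \<Rightarrow> nat list \<Rightarrow> real"
    using assms by (intro sum.cong refl) auto
  have "herm_sq h1 w = (\<Sum>a\<in>H1. \<Sum>b\<in>H1. if w = rev a @ b then h1 a * h1 b else 0)"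
    by (rule herm_sq_eq_sum_pairs[OF finite_H1 h1_support])
  moreover have "herm_sq h2 w = (\<Sum>a\<in>H2. \<Sum>b\<in>H2. if w = rev a @ b then h2 a * h2 b else 0)"
    by (rule herm_sq_eq_sum_pairs[OF finite_H2 h2_support])
  ultimately show ?thesis
    unfolding f_ex_def restrict by (simp add: H1_def H2_def h1_def h2_def)
qed

lemma f_ex_split: "\<exists>g h. nc_poly {1,2} g \<and> nc_poly {2,3} h \<and> f_ex = (\<lambda>w. g w + h w)"
proof (rule nc_poly_split)
  show "finite {w. f_ex w \<noteq> 0}" using nc_poly_f_ex by (simp add: nc_poly_def)
  fix w assume "f_ex w \<noteq> 0"
  with nc_poly_f_ex f_ex_mixed have "set w \<subseteq> {1,2,3}" "\<not> (1 \<in> set w \<and> 3 \<in> set w)"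
    by (auto simp: nc_poly_def)
  then show "set w \<subseteq> {1,2} \<or> set w \<subseteq> {2,3}" by auto
qed

lemma lam_f_ex: "lam f_ex = -2"
proof -
  have "H1 \<subseteq> words {1,2,3} 2" "H2 \<subseteq> words {1,2,3} 2"
    by (auto simp: H1_def H2_def words_def)
  then have "lam f_ex = (\<Sum>a\<in>H1. \<Sum>b\<in>H1. h1 a * h1 b * lam_word (rev a @ b))
      + (\<Sum>a\<in>H2. \<Sum>b\<in>H2. h2 a * h2 b * lam_word (rev a @ b))"
    using finite_H1 finite_H2 h1_support h2_support by (simp add: f_ex_def lam_add lam_herm_sq)
  also have "\<dots> = -2"
    by (simp add: H1_def H2_def h1_def h2_def lam_word_def rep_word_def rep_def)
  finally show ?thesis .
qed

lemma f_ex_not_SOHS_split: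
  "\<not> (\<exists>g h. SOHS {1,2} g \<and> SOHS {2,3} h \<and> f_ex = (\<lambda>w. g w + h w))"
proof
  assume "\<exists>g h. SOHS {1,2} g \<and> SOHS {2,3} h \<and> f_ex = (\<lambda>w. g w + h w)"
  then obtain g h where sohs: "SOHS {1,2} g" "SOHS {2,3} h" and f_gh: "f_ex = (\<lambda>w. g w + h w)"
    by blast
  obtain I :: "(nat + nat) set" and hs where I: "finite I"
    and hs: "\<And>i. i \<in> I \<Longrightarrow> nc_poly {1,2} (hs i) \<or> nc_poly {2,3} (hs i)"
    and "(\<lambda>w. g w + h w) = (\<lambda>w. \<Sum>i\<in>I. herm_sq (hs i) w)"
    using SOHS_add_family[OF sohs] by blast
  with f_gh have f: "f_ex = (\<lambda>w. \<Sum>i\<in>I. herm_sq (hs i) w)" by simp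
  have deg: "length w \<le> 2" if "i \<in> I" "hs i w \<noteq> 0" for i w
  proof (rule SOHS_degree_bound[where hs=hs and d=2, OF I _ _ that])
    show "finite {w. hs j w \<noteq> 0}" if "j \<in> I" for j
      using hs[OF that] by (auto simp: nc_poly_def)
    show "(\<Sum>j\<in>I. herm_sq (hs j) v) = 0" if "2 * 2 < length v" for v
      using f_ex_degree[of v] that unfolding f by linarith
  qed
  have "0 \<le> lam f_ex"
    unfolding f lam_sum using hs deg by (intro sum_nonneg lam_herm_sq_nonneg) auto
  with lam_f_ex show False by simp
qed

theorem lemma6p2:
  shows "\<exists>f. nc_poly {1,2,3} f \<and> nc_star f = f
    \<and> (\<exists>g h. nc_poly {1,2} g \<and> nc_poly {2,3} h \<and> f = (\<lambda>w. g w + h w))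
    \<and> SOHS {1,2,3} f
    \<and> \<not> (\<exists>g h. SOHS {1,2} g \<and> SOHS {2,3} h \<and> f = (\<lambda>w. g w + h w))"
  using nc_poly_f_ex nc_star_f_ex f_ex_split SOHS_f_ex f_ex_not_SOHS_split by blast

end
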